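(* Let $k\ge2$ and let $u_1,\dots,u_k,v_1,\dots,v_k$ be nonnegative integers with $$u_1<u_2<v_1<u_3<v_2<u_4<v_3<\dots<u_k<v_{k-1}<v_k.$$ Then $$\det F_{\mathbf u,\mathbf v}=(-y)^{\sum_{i=1}^{k-1}(v_i-u_{i+1}+1)}\,q^{\sum_{i=1}^{k-1}\left[\binom{v_i}2-\binom{u_{i+1}-1}2\right]}\cdot F_{u_2-u_1-1}(xq^{u_1},yq^{u_1},q)\,F_{v_k-v_{k-1}-1}(xq^{v_{k-1}+1},yq^{v_{k-1}+1},q)\prod_{i=1}^{k-2}F_{u_{i+2}-v_i-2}(xq^{v_i+1},yq^{v_i+1},q),$$ with the convention $F_{-1}:=0$.
   Context: $F_n(x,y,q)=\sum_{\pi}x^{s(\pi)}y^{d(\pi)}q^{rb(\pi)}$, where: - $\pi$ ranges over layered matchings of $[n]$, i.e. set partitions whose blocks are consecutive intervals $[1,i_1]/\dots/[i_{k-1}+1,n]$ of size $1$ or $2$; - $s(\pi)$ and $d(\pi)$ are the numbers of blocks of size $1$ and $2$; - for $\pi=B_1/\dots/B_k$ with $\min B_1<\dots<\min B_k$, $rb(\pi)$ is the number of pairs $(b,B_j)$ with $b\in B_i$, $j>i$, $\max B_j>b$. Equivalently, $F_0=1$, $F_1=x$, and $F_n=xq^{n-1}F_{n-1}+yq^{n-2}F_{n-2}$ for $n\ge2$. Let $F$ be the infinite matrix with rows and columns indexed by $0,1,2,\dots$. Its $(a,b)$ entry is $F_{b-a}(xq^a,yq^a,q)$ if $b\ge a$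 and $0$ if $b<a$. $F_{\mathbf u,\mathbf v}$ is the $k\times k$ submatrix with rows $u_1<\dots<u_k$ and columns $v_1<\dots<v_k$. $\binom{m}{2}=m(m-1)/2$. *)

theory Defs
  imports "Jordan_Normal_Form.Determinant"
begin

fun Fpoly :: "nat \<Rightarrow> 'a::comm_ring_1 \<Rightarrow> 'a \<Rightarrow> 'a \<Rightarrow> 'a" where
  "Fpoly 0 x y q = 1"
| "Fpoly (Suc 0) x y q = x"
| "Fpoly (Suc (Suc n)) x y q = x * q ^ (Suc n) * Fpoly (Suc n) x y q + y * q ^ n * Fpoly n x y q"

definition Fint :: "int \<Rightarrow> 'a::comm_ring_1 \<Rightarrow> 'a \<Rightarrow> 'a \<Rightarrow> 'a" where
  "Fint n x y q = (if n < 0 then 0 else Fpoly (nat n) x y q)"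

definition Fentry :: "'a::comm_ring_1 \<Rightarrow> 'a \<Rightarrow> 'a \<Rightarrow> nat \<Rightarrow> nat \<Rightarrow> 'a" where
  "Fentry x y q a b = (if a \<le> b then Fpoly (b - a) (x * q ^ a) (y * q ^ a) q else 0)"

definition Fsub :: "'a::comm_ring_1 \<Rightarrow> 'a \<Rightarrow> 'a \<Rightarrow> nat \<Rightarrow> (nat \<Rightarrow> nat) \<Rightarrow> (nat \<Rightarrow> nat) \<Rightarrow> 'a mat" where
  "Fsub x y q k u v = mat k k (\<lambda>(i, j). Fentry x y q (u (i + 1)) (v (j + 1)))"

end

theory Submission
  imports Defs
begin

(* Write G(a,b) = F_(b-a)(x q^a, y q^a, q) for the (a,b) entry of F (Fentry).
   Expanding F along its first block gives the "cut" identity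
     G(a,b) = G(a,c) G(c,b) + y q^(c-1) G(a,c-1) G(c+1,b)      (a <= c <= b),
   so, in a minor with rows r_0 <= r_1 and all columns >= r_1, row r_0 equals
   G(r_0,r_1) * (row r_1) + y q^(r_1-1) G(r_0,r_1-1) * (row r_1+1).  One row
   operation and a swap therefore replace the rows (r_0, r_1) by (r_1, r_1+1)
   at the price of a factor -y q^(r_1-1) G(r_0,r_1-1).  Sliding this pair of
   consecutive rows up to (c_0, c_0+1) makes the first column a unit column,
   and Laplace expansion removes row c_0 and column c_0.  What remains is a
   minor of the same interlaced shape with rows (c_0+1, r_2, ...), so the
   theorem follows by induction on the size (det_Fminor_interlaced), after
   translating the 0-indexed minors used here back to the 1-indexed
   statement with Fint. *)

(* The defining recursion of F peels off the last block; this is the same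
   recursion read from the first block, which is what row operations need. *)
lemma Fpoly_expand_first:
  "Fpoly (Suc (Suc n)) X Y q = X * Fpoly (Suc n) (X * q) (Y * q) q + Y * Fpoly n (X * q^2) (Y * q^2) q"
proof (induction n X Y q rule: Fpoly.induct)
  case (3 n X Y q)
  have "Fpoly (Suc (Suc (Suc (Suc n)))) X Y q
      = X * q ^ Suc (Suc (Suc n)) * Fpoly (Suc (Suc (Suc n))) X Y q + Y * q ^ Suc (Suc n) * Fpoly (Suc (Suc n)) X Y q"
    by (simp only: Fpoly.simps)
  also have "\<dots> = X * (X * q * q ^ Suc (Suc n) * Fpoly (Suc (Suc n)) (X * q) (Y * q) q
                        + Y * q * q ^ Suc n * Fpoly (Suc n) (X * q) (Y * q) q)
                 + Y * (X * q^2 * q ^ Suc n * Fpoly (Suc n) (X * q^2) (Y * q^2) q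
                        + Y * q^2 * q ^ n * Fpoly n (X * q^2) (Y * q^2) q)"
    unfolding "3.IH" by (simp add: algebra_simps power2_eq_square)
  also have "\<dots> = X * Fpoly (Suc (Suc (Suc n))) (X * q) (Y * q) q + Y * Fpoly (Suc (Suc n)) (X * q^2) (Y * q^2) q"
    by (simp only: Fpoly.simps)
  finally show ?case .
qed (simp_all add: algebra_simps power2_eq_square)

lemma sum_atLeastLessThan_choose2:
  assumes "a \<le> b"
  shows "(\<Sum>i=a..<b. i) = (b choose 2) - (a choose 2)"
  using assms
proof (induction b)
  case (Suc b)
  show ?case
  proof (cases "a = Suc b")
    case False
    then have "a \<le> b" using Suc.prems by simp
    moreover have "(Suc b choose 2) = (b choose 2) + b" by (simp add: numeral_2_eq_2)
    ultimately show ?thesis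
      using Suc.IH binomial_right_mono[of a b 2] by simp
  qed simp
qed simp

lemma Fentry_diag [simp]: "Fentry x y q a a = 1"
  by (simp add: Fentry_def)

lemma Fentry_below: "b < a \<Longrightarrow> Fentry x y q a b = 0"
  by (simp add: Fentry_def)

lemma Fentry_first_step:
  assumes "a < b"
  shows "Fentry x y q a b = x * q^a * Fentry x y q (a + 1) b + y * q^a * Fentry x y q (a + 2) b"
proof -
  obtain n where b: "b = Suc (a + n)" using less_imp_Suc_add[OF assms] by blast
  show ?thesis
  proof (cases n)
    case (Suc m)
    have "Fentry x y q a b = Fpoly (Suc (Suc m)) (x * q^a) (y * q^a) q"
      using b Suc by (simp add: Fentry_def)
    also have "\<dots> = x * q^a * Fpoly (Suc m) (x * q^(a + 1)) (y * q^(a + 1)) q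
                    + y * q^a * Fpoly m (x * q^(a + 2)) (y * q^(a + 2)) q"
      by (simp only: Fpoly_expand_first power_add power_one_right mult.assoc)
    finally show ?thesis using b Suc by (simp add: Fentry_def)
  qed (use b in \<open>simp add: Fentry_def\<close>)
qed

(* The cut identity: G(a,b) splits at any intermediate point c, according to
   whether c starts a block or is the second element of a pair. *)
lemma Fentry_cut:
  assumes "a \<le> c" "c \<le> b" "1 \<le> c"
  shows "Fentry x y q a b = Fentry x y q a c * Fentry x y q c b
           + y * q^(c - 1) * Fentry x y q a (c - 1) * Fentry x y q (c + 1) b"
  using assms
proof (induction "c - a" arbitrary: a rule: less_induct)
  case less
  consider "a = c" | "a + 1 = c" | "a + 2 \<le> c" using less.prems by linarith
  then show ?case
  proof cases
    case 1
    then show ?thesis using less.prems by (simp add: Fentry_below)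
  next
    case 2
    then show ?thesis
      using Fentry_first_step[of a b] less.prems by (auto simp: Fentry_def)
  next
    case 3
    let ?G = "Fentry x y q" and ?\<beta> = "y * q^(c - 1)"
    have IH1: "?G (a + 1) b = ?G (a + 1) c * ?G c b + ?\<beta> * ?G (a + 1) (c - 1) * ?G (c + 1) b"
      using less.hyps[of "a + 1"] less.prems 3 by simp
    have IH2: "?G (a + 2) b = ?G (a + 2) c * ?G c b + ?\<beta> * ?G (a + 2) (c - 1) * ?G (c + 1) b"
      using less.hyps[of "a + 2"] less.prems 3 by simp
    have step: "?G a d = x * q^a * ?G (a + 1) d + y * q^a * ?G (a + 2) d" if "a < d" for d
      using Fentry_first_step that by blast
    have "?G a b = x * q^a * ?G (a + 1) b + y * q^a * ?G (a + 2) b"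
      using step 3 less.prems by simp
    also have "\<dots> = (x * q^a * ?G (a + 1) c + y * q^a * ?G (a + 2) c) * ?G c b
        + ?\<beta> * (x * q^a * ?G (a + 1) (c - 1) + y * q^a * ?G (a + 2) (c - 1)) * ?G (c + 1) b"
      unfolding IH1 IH2 by (simp add: algebra_simps)
    also have "\<dots> = ?G a c * ?G c b + ?\<beta> * ?G a (c - 1) * ?G (c + 1) b"
      using step[of c] step[of "c - 1"] 3 by simp
    finally show ?thesis .
  qed
qed

definition Fminor :: "'a::comm_ring_1 \<Rightarrow> 'a \<Rightarrow> 'a \<Rightarrow> nat \<Rightarrow> (nat \<Rightarrow> nat) \<Rightarrow> (nat \<Rightarrow> nat) \<Rightarrow> 'a mat" where
  "Fminor x y q k r c = mat k k (\<lambda>(i, j). Fentry x y q (r i) (c j))"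

lemma Fminor_carrier [simp]: "Fminor x y q k r c \<in> carrier_mat k k"
  by (simp add: Fminor_def)

lemma det_Fminor_row_combination:
  assumes k: "2 \<le> k"
    and row0: "\<forall>j<k. Fentry x y q (r 0) (c j) = \<alpha> * Fentry x y q (r 1) (c j) + \<beta> * Fentry x y q s (c j)"
  shows "det (Fminor x y q k r c) = - \<beta> * det (Fminor x y q k (r(0 := r 1, 1 := s)) c)"
proof -
  define M where "M = Fminor x y q k (r(0 := s)) c"
  have M: "M \<in> carrier_mat k k" by (simp add: M_def)
  have combination: "Fminor x y q k r c = addrow \<alpha> 0 1 (multrow 0 \<beta> M)"
    by (rule eq_matI) (use k row0 in \<open>auto simp: Fminor_def M_def add.commute\<close>)
  have swapped: "swaprows 0 1 M = Fminor x y q k (r(0 := r 1, 1 := s)) c"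
    by (rule eq_matI) (use k in \<open>auto simp: Fminor_def M_def\<close>)
  have "det (Fminor x y q k r c) = det (multrow 0 \<beta> M)"
    unfolding combination by (rule det_addrow) (use k M in auto)
  also have "\<dots> = \<beta> * det M"
    by (rule det_multrow) (use k M in auto)
  also have "det M = - det (swaprows 0 1 M)"
    using det_swaprows[of 0 k 1 M] k M by simp
  finally show ?thesis unfolding swapped by simp
qed

lemma det_Fminor_slide:
  assumes k: "2 \<le> k" and rows: "r 0 \<le> r 1" "1 \<le> r 1" and cols: "\<forall>j<k. r 1 \<le> c j"
  shows "det (Fminor x y q k r c)
       = - (y * q^(r 1 - 1) * Fentry x y q (r 0) (r 1 - 1))
         * det (Fminor x y q k (r(0 := r 1, 1 := r 1 + 1)) c)"
proof (rule det_Fminor_row_combination[OF k], intro allI impI)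
  fix j assume "j < k"
  then show "Fentry x y q (r 0) (c j) = Fentry x y q (r 0) (r 1) * Fentry x y q (r 1) (c j)
          + y * q^(r 1 - 1) * Fentry x y q (r 0) (r 1 - 1) * Fentry x y q (r 1 + 1) (c j)"
    using Fentry_cut[of "r 0" "r 1" "c j"] rows cols by (simp add: mult.assoc)
qed

(* Iterating the slide m + 1 times; from the second slide on the leading
   entry is G(a,a) = 1, so only powers of -y and q accumulate. *)
lemma det_Fminor_slide_iter:
  assumes k: "2 \<le> k" and rows: "r 0 \<le> r 1" "1 \<le> r 1" and cols: "\<forall>j<k. r 1 + m \<le> c j"
  shows "det (Fminor x y q k r c)
       = (- y)^(m + 1) * q^(\<Sum>i = r 1 - 1..<r 1 + m. i) * Fentry x y q (r 0) (r 1 - 1)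
         * det (Fminor x y q k (r(0 := r 1 + m, 1 := r 1 + m + 1)) c)"
  using rows cols
proof (induction m arbitrary: r)
  case 0
  then have cols0: "\<forall>j<k. r 1 \<le> c j" by simp
  define D where "D = det (Fminor x y q k (r(0 := r 1, 1 := r 1 + 1)) c)"
  have "(\<Sum>i = r 1 - 1..<r 1. i) = r 1 - 1"
    using "0.prems"(2) by (cases "r 1") auto
  moreover have "det (Fminor x y q k r c) = - (y * q^(r 1 - 1) * Fentry x y q (r 0) (r 1 - 1)) * D"
    unfolding D_def by (rule det_Fminor_slide[OF k "0.prems"(1,2) cols0])
  moreover have "r(0 := r 1 + 0, 1 := r 1 + 0 + 1) = r(0 := r 1, 1 := r 1 + 1)" by simp
  ultimately show ?case by (simp only: D_def[symmetric]) simp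
next
  case (Suc m)
  define r' where "r' = r(0 := r 1, 1 := r 1 + 1)"
  define D where "D = det (Fminor x y q k (r(0 := r 1 + Suc m, 1 := r 1 + Suc m + 1)) c)"
  have r': "r' 0 = r 1" "r' 1 = r 1 + 1"
    and shifted: "r'(0 := r' 1 + m, 1 := r' 1 + m + 1) = r(0 := r 1 + Suc m, 1 := r 1 + Suc m + 1)"
    by (simp_all add: r'_def fun_eq_iff)
  have slide: "det (Fminor x y q k r c)
      = - (y * q^(r 1 - 1) * Fentry x y q (r 0) (r 1 - 1)) * det (Fminor x y q k r' c)"
    unfolding r'_def by (rule det_Fminor_slide[OF k]) (use Suc.prems in auto)
  have "det (Fminor x y q k r' c)
      = (- y)^(m + 1) * q^(\<Sum>i = r' 1 - 1..<r' 1 + m. i) * Fentry x y q (r' 0) (r' 1 - 1)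
        * det (Fminor x y q k (r'(0 := r' 1 + m, 1 := r' 1 + m + 1)) c)"
    by (rule Suc.IH) (use Suc.prems in \<open>auto simp: r'_def\<close>)
  then have IH: "det (Fminor x y q k r' c) = (- y)^(m + 1) * q^(\<Sum>i = r 1..<r 1 + Suc m. i) * D"
    unfolding shifted unfolding r' D_def by simp
  have exponent: "(\<Sum>i = r 1 - 1..<r 1 + Suc m. i) = (r 1 - 1) + (\<Sum>i = r 1..<r 1 + Suc m. i)"
    using Suc.prems(2) sum.atLeast_Suc_lessThan[of "r 1 - 1" "r 1 + Suc m" id] by simp
  show ?case
    unfolding slide IH exponent D_def[symmetric] by (simp add: power_add algebra_simps)
qed

(* If the first column is the unit vector e_0, Laplace expansion along it
   deletes the first row and column. *)
lemma det_Fminor_unit_column: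
  assumes k: "k = Suc k'" and diag: "r 0 = c 0" and below: "\<forall>i. 1 \<le> i \<and> i < k \<longrightarrow> c 0 < r i"
  shows "det (Fminor x y q k r c) = det (Fminor x y q k' (\<lambda>i. r (Suc i)) (\<lambda>j. c (Suc j)))"
proof -
  let ?M = "Fminor x y q k r c"
  have "det ?M = (\<Sum>i<k. ?M $$ (i, 0) * cofactor ?M i 0)"
    by (rule laplace_expansion_column) (use k in auto)
  also have "\<dots> = ?M $$ (0, 0) * cofactor ?M 0 0 + (\<Sum>i<k'. ?M $$ (Suc i, 0) * cofactor ?M (Suc i) 0)"
    unfolding k by (rule sum.lessThan_Suc_shift)
  also have "(\<Sum>i<k'. ?M $$ (Suc i, 0) * cofactor ?M (Suc i) 0) = 0"
    using below k by (auto simp: Fminor_def Fentry_below intro!: sum.neutral)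
  also have "?M $$ (0, 0) = 1"
    using diag k by (simp add: Fminor_def)
  also have "cofactor ?M 0 0 = det (mat_delete ?M 0 0)"
    by (simp add: cofactor_def)
  also have "mat_delete ?M 0 0 = Fminor x y q k' (\<lambda>i. r (Suc i)) (\<lambda>j. c (Suc j))"
    by (rule eq_matI) (use k in \<open>auto simp: Fminor_def mat_delete_def\<close>)
  finally show ?thesis by simp
qed

lemma det_Fminor_single: "det (Fminor x y q 1 r c) = Fentry x y q (r 0) (c 0)"
  by (simp add: det_single Fminor_def)

(* The factor (-y)^(b-a+1) q^(C(b,2) - C(a-1,2)) collected when the row pair
   starting at a is slid up to column b. *)
definition slide_weight :: "'a::comm_ring_1 \<Rightarrow> 'a \<Rightarrow> nat \<Rightarrow> nat \<Rightarrow> 'a" where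
  "slide_weight y q a b = (- y)^(b - a + 1) * q^((b choose 2) - ((a - 1) choose 2))"

(* One induction step: slide rows (r_0, r_1) up to (c_0, c_0 + 1), then expand
   along the first column; row c_0 + 1 takes over the role of r_1. *)
lemma det_Fminor_peel:
  assumes k: "2 \<le> k" and rows: "r 0 \<le> r 1" "1 \<le> r 1" "r 1 < c 0"
    and cols: "\<forall>j<k. c 0 \<le> c j" and later_rows: "\<forall>i. 2 \<le> i \<and> i < k \<longrightarrow> c 0 < r i"
  shows "det (Fminor x y q k r c)
       = slide_weight y q (r 1) (c 0) * Fentry x y q (r 0) (r 1 - 1)
         * det (Fminor x y q (k - 1) ((\<lambda>i. r (Suc i))(0 := c 0 + 1)) (\<lambda>j. c (Suc j)))"
proof -
  define m where "m = c 0 - r 1"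
  have c0: "r 1 + m = c 0" using rows unfolding m_def by simp
  have exponent: "(\<Sum>i = r 1 - 1..<r 1 + m. i) = (c 0 choose 2) - ((r 1 - 1) choose 2)"
    unfolding c0 using rows by (intro sum_atLeastLessThan_choose2) simp
  have "det (Fminor x y q k r c)
      = (- y)^(m + 1) * q^(\<Sum>i = r 1 - 1..<r 1 + m. i) * Fentry x y q (r 0) (r 1 - 1)
        * det (Fminor x y q k (r(0 := r 1 + m, 1 := r 1 + m + 1)) c)"
    by (rule det_Fminor_slide_iter[OF k rows(1,2)]) (use cols c0 in auto)
  also have "det (Fminor x y q k (r(0 := r 1 + m, 1 := r 1 + m + 1)) c)
      = det (Fminor x y q (k - 1) ((\<lambda>i. r (Suc i))(0 := c 0 + 1)) (\<lambda>j. c (Suc j)))"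
  proof -
    have "det (Fminor x y q k (r(0 := c 0, 1 := c 0 + 1)) c)
        = det (Fminor x y q (k - 1) (\<lambda>i. (r(0 := c 0, 1 := c 0 + 1)) (Suc i)) (\<lambda>j. c (Suc j)))"
      by (rule det_Fminor_unit_column) (use k later_rows in auto)
    moreover have "(\<lambda>i. (r(0 := c 0, 1 := c 0 + 1)) (Suc i)) = (\<lambda>i. r (Suc i))(0 := c 0 + 1)"
      by (auto simp: fun_eq_iff)
    ultimately show ?thesis unfolding c0 by simp
  qed
  finally show ?thesis
    unfolding exponent by (simp add: slide_weight_def m_def)
qed

lemma interlacing_bounds:
  fixes r c :: "nat \<Rightarrow> nat"
  assumes k: "2 \<le> k" and row_col: "\<forall>i<k - 1. r (i + 1) < c i"
    and col_row: "\<forall>i<k - 2. c i < r (i + 2)" and last: "c (k - 2) < c (k - 1)"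
  shows "\<forall>j<k. c 0 \<le> c j" and "\<forall>i. 2 \<le> i \<and> i < k \<longrightarrow> c 0 < r i"
proof -
  have increasing: "c i < c (Suc i)" if "Suc i < k" for i
  proof (cases "i < k - 2")
    case True
    then have "Suc i < k - 1" by arith
    then show ?thesis using row_col[rule_format, of "Suc i"] col_row[rule_format, of i] True by simp
  next
    case False
    with that have "i = k - 2" by simp
    then show ?thesis using last k by (simp add: Suc_diff_Suc numeral_2_eq_2)
  qed
  have above_first: "c 0 \<le> c j" if "j < k" for j
    using that by (induction j) (auto dest: increasing intro: order_trans less_imp_le)
  show "\<forall>j<k. c 0 \<le> c j" using above_first by blast
  show "\<forall>i. 2 \<le> i \<and> i < k \<longrightarrow> c 0 < r i"
  proof (intro allI impI)
    fix i assume i: "2 \<le> i \<and> i < k"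
    then have "i - 2 < k - 2" and "i - 2 + 2 = i" by arith+
    then have "c (i - 2) < r i" using col_row by metis
    moreover have "c 0 \<le> c (i - 2)" by (rule above_first) (use i in arith)
    ultimately show "c 0 < r i" by simp
  qed
qed

lemma det_Fminor_interlaced:
  assumes k: "2 \<le> k" and first_rows: "r 0 \<le> r 1" "1 \<le> r 1"
    and row_col: "\<forall>i<k - 1. r (i + 1) < c i" and col_row: "\<forall>i<k - 2. c i < r (i + 2)"
    and last: "c (k - 2) < c (k - 1)"
  shows "det (Fminor x y q k r c)
       = (\<Prod>i<k - 1. slide_weight y q (r (i + 1)) (c i)) * Fentry x y q (r 0) (r 1 - 1)
         * Fentry x y q (c (k - 2) + 1) (c (k - 1))
         * (\<Prod>i<k - 2. Fentry x y q (c i + 1) (r (i + 2) - 1))"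
  using k first_rows row_col col_row last
proof (induction k arbitrary: r c rule: nat_induct_at_least)
  case base
  have "det (Fminor x y q 2 r c)
      = slide_weight y q (r 1) (c 0) * Fentry x y q (r 0) (r 1 - 1)
        * det (Fminor x y q (2 - 1) ((\<lambda>i. r (Suc i))(0 := c 0 + 1)) (\<lambda>j. c (Suc j)))"
    by (rule det_Fminor_peel) (use base interlacing_bounds[of 2 r c] in auto)
  then show ?case by (simp add: det_Fminor_single[unfolded One_nat_def])
next
  case (Suc n)
  define r' where "r' = (\<lambda>i. r (Suc i))(0 := c 0 + 1)"
  define c' where "c' = (\<lambda>j. c (Suc j))"
  obtain p where p: "n = Suc (Suc p)" using Suc.hyps by (metis add_2_eq_Suc le_Suc_ex)
  have peel: "det (Fminor x y q (Suc n) r c)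
      = slide_weight y q (r 1) (c 0) * Fentry x y q (r 0) (r 1 - 1) * det (Fminor x y q n r' c')"
    using det_Fminor_peel[of "Suc n" r c] interlacing_bounds[of "Suc n" r c] Suc.prems Suc.hyps
    unfolding r'_def c'_def by simp
  have IH: "det (Fminor x y q n r' c')
      = (\<Prod>i<n - 1. slide_weight y q (r' (i + 1)) (c' i)) * Fentry x y q (r' 0) (r' 1 - 1)
        * Fentry x y q (c' (n - 2) + 1) (c' (n - 1))
        * (\<Prod>i<n - 2. Fentry x y q (c' i + 1) (r' (i + 2) - 1))"
  proof (rule Suc.IH)
    show "r' 0 \<le> r' 1" "1 \<le> r' 1" using Suc.prems(4) p unfolding r'_def by (auto simp: numeral_2_eq_2)
    show "\<forall>i<n - 1. r' (i + 1) < c' i" using Suc.prems(3) p unfolding r'_def c'_def by auto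
    show "\<forall>i<n - 2. c' i < r' (i + 2)" using Suc.prems(4) p unfolding r'_def c'_def by auto
    show "c' (n - 2) < c' (n - 1)" using Suc.prems(5) p unfolding c'_def by simp
  qed
  show ?case
    unfolding peel IH unfolding p
    by (simp del: prod.lessThan_Suc add: prod.lessThan_Suc_shift r'_def c'_def algebra_simps)
qed

lemma Fint_eq_Fentry:
  assumes "a \<le> b + 1"
  shows "Fint (int b - int a) (x * q^a) (y * q^a) q = Fentry x y q a b"
  using assms by (cases "a = b + 1") (auto simp: Fint_def Fentry_def nat_diff_distrib)

lemma power_sums_eq_prod_slide_weight:
  "(- y)^(\<Sum>i\<in>I. b i - a i + 1) * q^(\<Sum>i\<in>I. (b i choose 2) - ((a i - 1) choose 2))
     = (\<Prod>i\<in>I. slide_weight y q (a i) (b i))"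
  unfolding slide_weight_def power_sum prod.distrib ..

lemma prod_Fint_gaps:
  fixes u v :: "nat \<Rightarrow> nat"
  assumes gaps: "\<forall>i\<in>{1..n}. v i < u (i + 2)"
  shows "(\<Prod>i=1..n. Fint (int (u (i + 2)) - int (v i) - 2) (x * q ^ (v i + 1)) (y * q ^ (v i + 1)) q)
       = (\<Prod>i<n. Fentry x y q (v (i + 1) + 1) (u (i + 3) - 1))"
proof -
  have "Fint (int (u (i + 2)) - int (v i) - 2) (x * q ^ (v i + 1)) (y * q ^ (v i + 1)) q
      = Fentry x y q (v i + 1) (u (i + 2) - 1)" if "i \<in> {1..n}" for i
  proof -
    have "v i < u (i + 2)" using gaps that by blast
    then show ?thesis
      using Fint_eq_Fentry[of "v i + 1" "u (i + 2) - 1" x q y] by (simp add: of_nat_diff algebra_simps)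
  qed
  then have "(\<Prod>i=1..n. Fint (int (u (i + 2)) - int (v i) - 2) (x * q ^ (v i + 1)) (y * q ^ (v i + 1)) q)
      = (\<Prod>i=1..n. Fentry x y q (v i + 1) (u (i + 2) - 1))"
    by (rule prod.cong[OF refl])
  then show ?thesis
    by (simp add: prod.atLeast1_atMost_eq numeral_3_eq_3)
qed

theorem theorem5p4:
  fixes x y q :: "'a::comm_ring_1" and k :: nat and u v :: "nat \<Rightarrow> nat"
  assumes "k \<ge> 2"
    and "u 1 < u 2"
    and "\<forall>i\<in>{1..k-1}. u (i + 1) < v i"
    and "\<forall>i\<in>{1..k-2}. v i < u (i + 2)"
    and "v (k - 1) < v k"
  shows "det (Fsub x y q k u v) =
    (- y) ^ (\<Sum>i=1..k-1. v i - u (i + 1) + 1)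
    * q ^ (\<Sum>i=1..k-1. (v i choose 2) - ((u (i + 1) - 1) choose 2))
    * Fint (int (u 2) - int (u 1) - 1) (x * q ^ u 1) (y * q ^ u 1) q
    * Fint (int (v k) - int (v (k - 1)) - 1) (x * q ^ (v (k - 1) + 1)) (y * q ^ (v (k - 1) + 1)) q
    * (\<Prod>i=1..k-2. Fint (int (u (i + 2)) - int (v i) - 2) (x * q ^ (v i + 1)) (y * q ^ (v i + 1)) q)"
proof -
  note k = assms(1) and first = assms(2) and row_col = assms(3) and col_row = assms(4) and last = assms(5)
  define r where "r = (\<lambda>i. u (i + 1))"
  define c where "c = (\<lambda>j. v (j + 1))"
  have k_idx: "k - 2 + 1 = k - 1" "k - 1 + 1 = k" using k by arith+
  have "det (Fsub x y q k u v) = det (Fminor x y q k r c)"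
    by (simp add: Fsub_def Fminor_def r_def c_def)
  also have "\<dots> = (\<Prod>i<k - 1. slide_weight y q (r (i + 1)) (c i)) * Fentry x y q (r 0) (r 1 - 1)
         * Fentry x y q (c (k - 2) + 1) (c (k - 1))
         * (\<Prod>i<k - 2. Fentry x y q (c i + 1) (r (i + 2) - 1))"
    by (rule det_Fminor_interlaced)
       (use k first row_col col_row last k_idx in \<open>auto simp: r_def c_def numeral_2_eq_2\<close>)
  also have "(\<Prod>i<k - 1. slide_weight y q (r (i + 1)) (c i))
      = (- y) ^ (\<Sum>i=1..k-1. v i - u (i + 1) + 1)
        * q ^ (\<Sum>i=1..k-1. (v i choose 2) - ((u (i + 1) - 1) choose 2))"
    unfolding power_sums_eq_prod_slide_weight by (simp add: prod.atLeast1_atMost_eq r_def c_def)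
  also have "Fentry x y q (r 0) (r 1 - 1) = Fint (int (u 2) - int (u 1) - 1) (x * q ^ u 1) (y * q ^ u 1) q"
    using Fint_eq_Fentry[of "u 1" "u 2 - 1" x q y] first by (simp add: r_def numeral_2_eq_2 algebra_simps)
  also have "Fentry x y q (c (k - 2) + 1) (c (k - 1))
      = Fint (int (v k) - int (v (k - 1)) - 1) (x * q ^ (v (k - 1) + 1)) (y * q ^ (v (k - 1) + 1)) q"
    unfolding c_def k_idx using Fint_eq_Fentry[of "v (k - 1) + 1" "v k" x q y] last by (simp add: algebra_simps)
  also have "(\<Prod>i<k - 2. Fentry x y q (c i + 1) (r (i + 2) - 1))
      = (\<Prod>i=1..k-2. Fint (int (u (i + 2)) - int (v i) - 2) (x * q ^ (v i + 1)) (y * q ^ (v i + 1)) q)"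
    using prod_Fint_gaps[OF col_row, of x q y] by (simp add: r_def c_def numeral_3_eq_3)
  finally show ?thesis .
qed

end
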